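(* Let $Y$ be a discrete random variable taking values in a set $\mathcal{Y}$, and let $B=(B_0,\dots,B_{m-1})$ be a random vector taking values in $\{0,1\}^m$. Assume $\mathbf{H}(Y\mid B)=0$ and that the components of $B$ are independent conditionally on $Y$. For $y_n\in\mathcal{Y}$ with $P(Y=y_n)>0$, let $\mathcal{B}_n=\{b\in\{0,1\}^m : P(B=b\mid Y=y_n)\neq 0\}$, let $\mathcal{B}=\bigcup_{y_n:\,P(Y=y_n)>0}\mathcal{B}_n$, define $\varphi^{(n)}\in\{-1,0,1\}^m$ by $\varphi^{(n)}_i=0$ if $P(B_i=1\mid Y=y_n)\in(0,1)$, $\varphi^{(n)}_i=-1$ if $P(B_i=1\mid Y=y_n)=0$, $\varphi^{(n)}_i=1$ if $P(B_i=1\mid Y=y_n)=1$, and define $\mu^{(n)}\in\mathbb{R}^{m+1}$ by $\mu^{(n)}_i=2\varphi^{(n)}_i$ for $0\le i<m$ and $\mu^{(n)}_m=1-\sum_{i=0}^{m-1}\big[(\varphi^{(n)}_i)^2+\varphi^{(n)}_i\big]$. Then for every $y_n$ with $P(Y=y_n)>0$ and every $b\in\mathcal{B}$: if $b\in\mathcal{B}_n$ then $(b_0,\dots,b_{m-1},1)\cdot\mu^{(n)}>0$, and if $b\notin\mathcal{B}_n$ then $(b_0,\dots,b_{m-1},1)\cdot\mu^{(n)}<0$.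
   Context: $\mathbf{H}(Y\mid B)$ is the conditional Shannon entropy; conditional independence of the components means $P(B=b\mid Y=y)=\prod_i P(B_i=b_i\mid Y=y)$ for all $b$ and all $y$ with $P(Y=y)>0$. The dot denotes the standard inner product on $\mathbb{R}^{m+1}$. *)

theory Defs
  imports "HOL-Probability.Probability"
begin

text \<open>The joint law of the pair (Y, B) is a discrete distribution
  p :: ('y \<times> bool list) pmf; the component B_i is the i-th list entry
  (True = 1, False = 0).\<close>

definition probY :: "('y \<times> bool list) pmf \<Rightarrow> 'y \<Rightarrow> real" where
  "probY p y = measure_pmf.prob p {z. fst z = y}"

definition probB :: "('y \<times> bool list) pmf \<Rightarrow> bool list \<Rightarrow> real" where
  "probB p b = measure_pmf.prob p {z. snd z = b}"

definition condB :: "('y \<times> bool list) pmf \<Rightarrow> bool list \<Rightarrow> 'y \<Rightarrow> real" where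
  "condB p b y = measure_pmf.prob p {z. fst z = y \<and> snd z = b} / probY p y"

definition condBi :: "('y \<times> bool list) pmf \<Rightarrow> nat \<Rightarrow> bool \<Rightarrow> 'y \<Rightarrow> real" where
  "condBi p i v y = measure_pmf.prob p {z. fst z = y \<and> snd z ! i = v} / probY p y"

text \<open>Conditional Shannon entropy H(Y | B) = E[ - log P(Y | B) ] (base 2),
  as an extended nonnegative real (the integrand is nonnegative on the support).\<close>
definition cond_entropy_YB :: "('y \<times> bool list) pmf \<Rightarrow> ennreal" where
  "cond_entropy_YB p = (\<integral>\<^sup>+ z. ennreal (- log 2 (pmf p z / probB p (snd z))) \<partial>measure_pmf p)"

definition cond_indep :: "('y \<times> bool list) pmf \<Rightarrow> nat \<Rightarrow> bool" where
  "cond_indep p m \<longleftrightarrow> (\<forall>y b. probY p y > 0 \<longrightarrow> length b = m \<longrightarrow>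
      condB p b y = (\<Prod>i<m. condBi p i (b ! i) y))"

definition supp_given :: "('y \<times> bool list) pmf \<Rightarrow> nat \<Rightarrow> 'y \<Rightarrow> bool list set" where
  "supp_given p m y = {b. length b = m \<and> condB p b y \<noteq> 0}"

definition supp_all :: "('y \<times> bool list) pmf \<Rightarrow> nat \<Rightarrow> bool list set" where
  "supp_all p m = (\<Union>y\<in>{y. probY p y > 0}. supp_given p m y)"

definition phi :: "('y \<times> bool list) pmf \<Rightarrow> 'y \<Rightarrow> nat \<Rightarrow> real" where
  "phi p y i = (if condBi p i True y = 0 then -1
                else if condBi p i True y = 1 then 1 else 0)"

definition mu :: "('y \<times> bool list) pmf \<Rightarrow> nat \<Rightarrow> 'y \<Rightarrow> nat \<Rightarrow> real" where
  "mu p m y i = (if i < m then 2 * phi p y i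
                 else 1 - (\<Sum>j<m. (phi p y j)\<^sup>2 + phi p y j))"

definition aug_dot :: "nat \<Rightarrow> bool list \<Rightarrow> (nat \<Rightarrow> real) \<Rightarrow> real" where
  "aug_dot m b v = (\<Sum>i<m. of_bool (b ! i) * v i) + 1 * v m"

end

theory Submission
  imports Defs
begin

text \<open>Conditionally on \<open>Y = y\<close>, the law of \<open>B\<close> is a product of Bernoulli laws, so \<open>b\<close> lies in
  its support iff no coordinate \<open>b_i\<close> has conditional probability zero. The vector \<open>\<mu>\<close> is built
  so that \<open>(b,1) \<bullet> \<mu> = 1 - 2 k\<close>, where \<open>k\<close> counts these forbidden coordinates: each
  coordinate contributes \<open>-2\<close> if \<open>b_i\<close> is impossible given \<open>y\<close> and \<open>0\<close> otherwise.\<close>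

lemma condBi_False_eq:
  assumes "probY p y > 0"
  shows "condBi p i False y = 1 - condBi p i True y"
proof -
  have "measure_pmf.prob p {z. fst z = y \<and> snd z ! i = True}
        + measure_pmf.prob p {z. fst z = y \<and> snd z ! i = False}
        = measure_pmf.prob p ({z. fst z = y \<and> snd z ! i = True} \<union> {z. fst z = y \<and> snd z ! i = False})"
    by (subst measure_pmf.finite_measure_Union) auto
  also have "{z. fst z = y \<and> snd z ! i = True} \<union> {z. fst z = y \<and> snd z ! i = False} = {z. fst z = y}"
    by auto
  finally show ?thesis
    using assms unfolding condBi_def probY_def by (simp add: field_simps)
qed

lemma phi_contribution_eq:
  assumes "probY p y > 0"
  shows "of_bool v * (2 * phi p y i) - ((phi p y i)\<^sup>2 + phi p y i)
           = (if condBi p i v y = 0 then -2 else 0)"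
  using condBi_False_eq[OF assms, of i] by (cases v) (auto simp: phi_def)

lemma aug_dot_mu_eq:
  assumes "probY p y > 0"
  shows "aug_dot m b (mu p m y) = 1 - 2 * real (card {i. i < m \<and> condBi p i (b ! i) y = 0})"
proof -
  have "aug_dot m b (mu p m y)
          = 1 + (\<Sum>i<m. of_bool (b ! i) * (2 * phi p y i) - ((phi p y i)\<^sup>2 + phi p y i))"
    unfolding aug_dot_def mu_def by (simp add: sum_subtractf)
  also have "\<dots> = 1 + (\<Sum>i<m. if condBi p i (b ! i) y = 0 then -2 else 0)"
    using phi_contribution_eq[OF assms] by simp
  also have "\<dots> = 1 - 2 * real (card {i. i < m \<and> condBi p i (b ! i) y = 0})"
    by (simp add: sum.If_cases lessThan_def Collect_conj_eq Int_commute)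
  finally show ?thesis .
qed

lemma supp_given_iff_coordinates:
  assumes "cond_indep p m" and "probY p y > 0" and "length b = m"
  shows "b \<in> supp_given p m y \<longleftrightarrow> (\<forall>i<m. condBi p i (b ! i) y \<noteq> 0)"
  using assms unfolding supp_given_def cond_indep_def by auto

theorem lemma6:
  fixes p :: "('y \<times> bool list) pmf" and m :: nat
  assumes len: "\<forall>z\<in>set_pmf p. length (snd z) = m"
    and H0: "cond_entropy_YB p = 0"
    and indep: "cond_indep p m"
    and yn: "probY p yn > 0"
    and b: "b \<in> supp_all p m"
  shows "(b \<in> supp_given p m yn \<longrightarrow> aug_dot m b (mu p m yn) > 0) \<and>
         (b \<notin> supp_given p m yn \<longrightarrow> aug_dot m b (mu p m yn) < 0)"
proof -
  define forbidden where "forbidden = {i. i < m \<and> condBi p i (b ! i) yn = 0}"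
  have "length b = m"
    using b unfolding supp_all_def supp_given_def by auto
  then have "b \<in> supp_given p m yn \<longleftrightarrow> forbidden = {}"
    using supp_given_iff_coordinates[OF indep yn] unfolding forbidden_def by auto
  moreover have "forbidden \<noteq> {} \<longleftrightarrow> card forbidden \<ge> 1"
    unfolding forbidden_def by (simp add: Suc_le_eq card_gt_0_iff)
  moreover have "aug_dot m b (mu p m yn) = 1 - 2 * real (card forbidden)"
    using aug_dot_mu_eq[OF yn] unfolding forbidden_def .
  ultimately show ?thesis
    by auto
qed

end
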